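(* Let $p$ and $q$ be primes with $\frac{3p-1}{2} < q < 2p-1$. Then $p$ and $q$ do not form a symmetric pair.
   Context: Two distinct primes $p$ and $q$ form a symmetric pair if $\gcd(p-1, q-1) = |p-q|$. *)

theory Defs
  imports Complex_Main "HOL-Computational_Algebra.Primes"
begin

definition symmetric_pair :: "nat \<Rightarrow> nat \<Rightarrow> bool" where
  "symmetric_pair p q \<longleftrightarrow> prime p \<and> prime q \<and> p \<noteq> q \<and>
     int (gcd (p - 1) (q - 1)) = \<bar>int p - int q\<bar>"

end

theory Submission
  imports Defs
begin

(* For a symmetric pair p < q the gap q - p is gcd (p - 1) (q - 1), hence a divisor of p - 1.
   The bounds on q place the gap strictly between (p - 1) / 2 and p - 1, and no divisor of
   p - 1 lies there. *)

lemma dvd_eq_if_less_double: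
  fixes d n :: nat
  assumes "d dvd n" and "0 < n" and "n < 2 * d"
  shows "d = n"
proof -
  obtain k where n: "n = d * k" using assms(1) by blast
  have "k \<noteq> 0" using n assms(2) by auto
  moreover have "k < 2" using n assms(3) by (metis mult.commute mult_less_cancel1)
  ultimately have "k = 1" by linarith
  then show ?thesis using n by simp
qed

lemma symmetric_pair_gap_dvd:
  assumes "symmetric_pair p q" and "p < q"
  shows "q - p dvd p - 1"
proof -
  have "gcd (p - 1) (q - 1) = q - p"
    using assms unfolding symmetric_pair_def by linarith
  then show ?thesis by (metis gcd_dvd1)
qed

theorem lemma2:
  fixes p q :: nat
  assumes "prime p" and "prime q"
    and "(3 * real p - 1) / 2 < real q" and "real q < 2 * real p - 1"
  shows "\<not> symmetric_pair p q"
proof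
  assume sym: "symmetric_pair p q"
  have "p \<ge> 2" using assms(1) prime_ge_2_nat by blast
  moreover have "3 * p < 2 * q + 1" using assms(3) by (simp add: field_simps)
  moreover have "q + 1 < 2 * p" using assms(4) by linarith
  ultimately have "p < q" and "p - 1 < 2 * (q - p)" and "q - p < p - 1" by linarith+
  moreover have "q - p dvd p - 1" using symmetric_pair_gap_dvd sym \<open>p < q\<close> .
  ultimately show False using dvd_eq_if_less_double \<open>p \<ge> 2\<close> by fastforce
qed

end
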